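(* Let $\alpha>0$, $\beta\ge0$, $\lambda\in[0,1]$ and $z\notin\operatorname{argmin}\phi$. For each $\tau\in(0,\tau_2)\cap(0,T^\lambda(z)]$ and each $t\in[\tau,T^\lambda(z)]$, $$\phi(x_z(t))-\phi^*\le\left(1-\Big[\frac{\alpha(1-\lambda)}{2}+\frac{\beta\mu\tau}{3}\Big]\frac{2\mu\tau^2\Psi(\tau)}{(\alpha+1)^2}\right)\big(\phi(z)-\phi^*\big),$$ where $\Psi(t)=\big(2-\frac{1}{H(t)}\big)^2$.
   Context: Let $\phi:\mathbb{R}^n\to\mathbb{R}$ be twice continuously differentiable, $\mu$-strongly convex ($\mu>0$), with $L$-Lipschitz gradient and minimum value $\phi^*$. For $z\in\mathbb{R}^n$, $x_z$ is the unique $C^1([0,\infty))\cap C^2((0,\infty))$ solution of $\ddot x(t)+\frac{\alpha}{t}\dot x(t)+\beta\nabla^2\phi(x(t))\dot x(t)+\nabla\phi(x(t))=0$ ($t>0$), $x(0)=z$, $\dot x(0)=0$. For $\lambda\in[0,1]$: $\varphi_{z,\lambda}(t)=\frac12\frac{d}{dt}\|\dot x_z(t)\|^2+\lambda\frac{\alpha}{t}\|\dot x_z(t)\|^2$ and $T^\lambda(z)=\inf\{t>0:\varphi_{z,\lambda}(t)\le0\}$. $H(t)=1-\frac{\beta Lt}{\alpha+2}-\frac{Lt^2}{2(\alpha+3)}$ and $\tau_2=-\frac{\alpha+3}{\alpha+2}\beta+\sqrt{\left(\frac{\alpha+3}{\alpha+2}\right)^2\beta^2+\frac{\alpha+3}{L}}$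 (so $H(\tau_2)=\frac12$). *)

theory Defs
  imports "HOL-Analysis.Analysis"
begin

definition strongly_convex :: "real \<Rightarrow> ('a::real_inner \<Rightarrow> real) \<Rightarrow> bool" where
  "strongly_convex mu f \<longleftrightarrow> convex_on UNIV (\<lambda>x. f x - mu / 2 * (norm x)\<^sup>2)"

definition H_fun :: "real \<Rightarrow> real \<Rightarrow> real \<Rightarrow> real \<Rightarrow> real" where
  "H_fun \<alpha> \<beta> L t = 1 - \<beta> * L * t / (\<alpha> + 2) - L * t\<^sup>2 / (2 * (\<alpha> + 3))"

definition tau2 :: "real \<Rightarrow> real \<Rightarrow> real \<Rightarrow> real" where
  "tau2 \<alpha> \<beta> L = - (\<alpha> + 3) / (\<alpha> + 2) * \<beta>
     + sqrt (((\<alpha> + 3) / (\<alpha> + 2))\<^sup>2 * \<beta>\<^sup>2 + (\<alpha> + 3) / L)"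

definition Psi_fun :: "real \<Rightarrow> real \<Rightarrow> real \<Rightarrow> real \<Rightarrow> real" where
  "Psi_fun \<alpha> \<beta> L t = (2 - 1 / H_fun \<alpha> \<beta> L t)\<^sup>2"

text \<open>varphi_{z,lambda}(t) = (1/2) d/dt |xdot|^2 + lambda alpha/t |xdot|^2, written with
  the velocity v and acceleration a of the trajectory: (1/2) d/dt |v|^2 = v . a.\<close>
definition varphi :: "real \<Rightarrow> real \<Rightarrow> (real \<Rightarrow> 'a::real_inner) \<Rightarrow> (real \<Rightarrow> 'a) \<Rightarrow> real \<Rightarrow> real" where
  "varphi \<alpha> lam v a t = v t \<bullet> a t + lam * \<alpha> / t * (norm (v t))\<^sup>2"

text \<open>T^lambda(z) = inf {t > 0. varphi(t) <= 0}, as an extended real (= infinity if the set is empty).\<close>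
definition T_lambda :: "real \<Rightarrow> real \<Rightarrow> (real \<Rightarrow> 'a::real_inner) \<Rightarrow> (real \<Rightarrow> 'a) \<Rightarrow> ereal" where
  "T_lambda \<alpha> lam v a = Inf (ereal ` {t. t > 0 \<and> varphi \<alpha> lam v a t \<le> 0})"

end

theory Submission
  imports Defs
begin

text \<open>As long as \<open>varphi\<close> is positive, i.e. before \<open>T\<^sup>\<lambda>(z)\<close>, the equation and the lower
  Hessian bound \<open>\<mu>\<close> give the dissipation estimate
  \<open>d/ds \<phi>(x(s)) \<le> -((1 - \<lambda>) \<alpha> / s + \<beta> \<mu>) |x'(s)|\<^sup>2\<close>, so \<open>\<phi>(x(s))\<close> decreases.
  On \<open>[0, \<tau>]\<close> the velocity is not small: the weighted momentum
  \<open>s\<^sup>\<alpha> (x'(s) + s / (\<alpha> + 1) \<nabla>\<phi>(z))\<close> has a derivative controlled by the upper Hessian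
  bound \<open>L\<close> and the displacement \<open>x(s) - z\<close>, which yields
  \<open>|x'(s)| \<ge> s |\<nabla>\<phi>(z)| (2 - 1 / H(s)) / (\<alpha> + 1)\<close>, a useful bound while \<open>H > 1/2\<close>.
  Integrating the dissipation against this bound on \<open>[0, \<tau>]\<close> and combining it with the
  Polyak-Lojasiewicz inequality \<open>|\<nabla>\<phi>(z)|\<^sup>2 \<ge> 2 \<mu> (\<phi>(z) - \<phi>\<^sup>*)\<close> gives the estimate.\<close>

lemma has_vector_derivative_along_line:
  assumes "(f has_derivative f') (at y)"
  shows "((\<lambda>e. f (y + e *\<^sub>R h)) has_vector_derivative f' h) (at 0)"
proof -
  have "((\<lambda>e::real. y + e *\<^sub>R h) has_vector_derivative h) (at 0)"
    by (auto intro!: derivative_eq_intros)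
  from vector_derivative_diff_chain_within[OF this has_derivative_at_withinI] assms
  show ?thesis by (simp add: o_def)
qed

lemma DERIV_le_of_increments_le:
  fixes f :: "real \<Rightarrow> real"
  assumes "(f has_real_derivative D) (at a)"
    and "\<And>e. 0 < e \<Longrightarrow> f (a + e) - f a \<le> K * e"
  shows "D \<le> K"
proof (rule tendsto_upperbound)
  show "((\<lambda>y. (f y - f a) / (y - a)) \<longlongrightarrow> D) (at_right a)"
    using assms(1) has_field_derivative_at_within has_field_derivative_iff by blast
  show "\<forall>\<^sub>F y in at_right a. (f y - f a) / (y - a) \<le> K"
    using eventually_at_right_less
  proof eventually_elim
    case (elim y)
    then show ?case using assms(2)[of "y - a"] by (simp add: divide_le_eq)
  qed
qed simp

lemma convex_on_line:
  assumes "convex_on UNIV f"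
  shows "convex_on UNIV (\<lambda>e::real. f (y + e *\<^sub>R d))"
proof (rule convex_onI)
  fix t a b :: real
  assume "0 < t" "t < 1"
  have "y + ((1 - t) *\<^sub>R a + t *\<^sub>R b) *\<^sub>R d = (1 - t) *\<^sub>R (y + a *\<^sub>R d) + t *\<^sub>R (y + b *\<^sub>R d)"
    by (simp add: algebra_simps)
  then show "f (y + ((1 - t) *\<^sub>R a + t *\<^sub>R b) *\<^sub>R d) \<le> (1 - t) * f (y + a *\<^sub>R d) + t * f (y + b *\<^sub>R d)"
    using convex_onD[OF assms] \<open>0 < t\<close> \<open>t < 1\<close> by simp
qed simp

lemma strongly_convex_above_tangent:
  fixes \<phi> :: "'a::real_inner \<Rightarrow> real"
  assumes grad: "\<And>y. (\<phi> has_derivative (\<lambda>h. grad y \<bullet> h)) (at y)"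
    and strong: "strongly_convex \<mu> \<phi>"
  shows "\<phi> x + grad x \<bullet> (y - x) + \<mu> / 2 * (norm (y - x))\<^sup>2 \<le> \<phi> y"
proof -
  define d where "d = y - x"
  define \<psi> where "\<psi> w = \<phi> w - \<mu> / 2 * (w \<bullet> w)" for w
  have "convex_on UNIV (\<lambda>e. \<psi> (x + e *\<^sub>R d))"
    using strong convex_on_line unfolding strongly_convex_def \<psi>_def by (simp add: dot_square_norm)
  moreover have "((\<lambda>e. \<psi> (x + e *\<^sub>R d)) has_real_derivative grad x \<bullet> d - \<mu> * (x \<bullet> d)) (at 0)"
  proof -
    have "((\<lambda>e. \<phi> (x + e *\<^sub>R d)) has_real_derivative grad x \<bullet> d) (at 0)"
      using has_vector_derivative_along_line[OF grad] has_real_derivative_iff_has_vector_derivative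
      by blast
    then show ?thesis
      unfolding \<psi>_def by (auto intro!: derivative_eq_intros simp: algebra_simps inner_commute)
  qed
  ultimately have "\<psi> (x + 1 *\<^sub>R d) - \<psi> (x + 0 *\<^sub>R d) \<ge> (grad x \<bullet> d - \<mu> * (x \<bullet> d)) * (1 - 0)"
    by (intro convex_on_imp_above_tangent) auto
  then have "grad x \<bullet> d - \<mu> * (x \<bullet> d) \<le> \<psi> y - \<psi> x"
    by (simp add: d_def)
  moreover have "y \<bullet> y = x \<bullet> x + 2 * (x \<bullet> d) + d \<bullet> d"
    by (simp add: d_def algebra_simps inner_commute)
  ultimately show ?thesis
    by (simp add: \<psi>_def d_def[symmetric] power2_norm_eq_inner algebra_simps)
qed

lemma strongly_convex_gradient_monotone:
  fixes \<phi> :: "'a::real_inner \<Rightarrow> real"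
  assumes grad: "\<And>y. (\<phi> has_derivative (\<lambda>h. grad y \<bullet> h)) (at y)"
    and strong: "strongly_convex \<mu> \<phi>"
  shows "\<mu> * (norm (y - x))\<^sup>2 \<le> (grad y - grad x) \<bullet> (y - x)"
  using strongly_convex_above_tangent[OF grad strong, of x y]
    strongly_convex_above_tangent[OF grad strong, of y x]
  by (simp add: norm_minus_commute inner_diff_left inner_diff_right inner_commute)

lemma strongly_convex_gradient_dominated:
  fixes \<phi> :: "'a::real_inner \<Rightarrow> real"
  assumes grad: "\<And>y. (\<phi> has_derivative (\<lambda>h. grad y \<bullet> h)) (at y)"
    and strong: "strongly_convex \<mu> \<phi>" and "\<mu> \<ge> 0"
  shows "2 * \<mu> * (\<phi> x - \<phi> y) \<le> (norm (grad x))\<^sup>2"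
proof -
  define g where "g = grad x"
  define d where "d = y - x"
  have "2 * \<mu> * (\<phi> x - \<phi> y) \<le> 2 * \<mu> * (- (g \<bullet> d) - \<mu> / 2 * (norm d)\<^sup>2)"
    using strongly_convex_above_tangent[OF grad strong, of x y] \<open>\<mu> \<ge> 0\<close>
    by (intro mult_left_mono) (auto simp: g_def d_def)
  also have "\<dots> = (norm g)\<^sup>2 - (norm (g + \<mu> *\<^sub>R d))\<^sup>2"
    by (simp add: power2_norm_eq_inner inner_commute algebra_simps)
  also have "\<dots> \<le> (norm g)\<^sup>2" by simp
  finally show ?thesis by (simp add: g_def)
qed

lemma lipschitz_on_imp_norm_derivative_le:
  fixes f :: "'a::real_normed_vector \<Rightarrow> 'b::real_inner"
  assumes deriv: "(f has_derivative f') (at y)" and lip: "L-lipschitz_on UNIV f"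
  shows "norm (f' h) \<le> L * norm h"
proof -
  define u where "u = f' h"
  have deriv_u: "((\<lambda>e. u \<bullet> f (y + e *\<^sub>R h)) has_real_derivative u \<bullet> u) (at 0)"
    using bounded_linear.has_vector_derivative[OF bounded_linear_inner_right
        has_vector_derivative_along_line[OF deriv]]
    by (simp add: u_def has_real_derivative_iff_has_vector_derivative)
  have increment: "u \<bullet> f (y + e *\<^sub>R h) - u \<bullet> f y \<le> (norm u * L * norm h) * e"
    if "0 < e" for e
  proof -
    have "u \<bullet> (f (y + e *\<^sub>R h) - f y) \<le> norm u * norm (f (y + e *\<^sub>R h) - f y)"
      by (rule norm_cauchy_schwarz)
    also have "\<dots> \<le> norm u * (L * dist (y + e *\<^sub>R h) y)"
      using lipschitz_onD[OF lip, of "y + e *\<^sub>R h" y]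
      by (intro mult_left_mono) (simp_all add: dist_norm)
    finally show ?thesis
      using that by (simp add: dist_norm algebra_simps)
  qed
  have "u \<bullet> u \<le> norm u * L * norm h"
    by (rule DERIV_le_of_increments_le[OF deriv_u]) (simp add: increment)
  then have "norm u * norm u \<le> norm u * (L * norm h)"
    by (simp add: power2_norm_eq_inner[symmetric] power2_eq_square mult.assoc)
  then show ?thesis
    using lipschitz_on_nonneg[OF lip] by (cases "u = 0") (auto simp: u_def)
qed

lemma strongly_convex_second_derivative_ge:
  fixes \<phi> :: "'a::real_inner \<Rightarrow> real"
  assumes grad: "\<And>y. (\<phi> has_derivative (\<lambda>h. grad y \<bullet> h)) (at y)"
    and strong: "strongly_convex \<mu> \<phi>"
    and deriv: "(grad has_derivative grad') (at y)"
  shows "\<mu> * (norm h)\<^sup>2 \<le> grad' h \<bullet> h"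
proof -
  have deriv_h: "((\<lambda>e. - (h \<bullet> grad (y + e *\<^sub>R h))) has_real_derivative - (h \<bullet> grad' h)) (at 0)"
    using bounded_linear.has_vector_derivative[OF bounded_linear_inner_right
        has_vector_derivative_along_line[OF deriv]]
    by (auto intro!: derivative_eq_intros simp: has_real_derivative_iff_has_vector_derivative)
  have increment: "h \<bullet> grad y - h \<bullet> grad (y + e *\<^sub>R h) \<le> - (\<mu> * (norm h)\<^sup>2 * e)"
    if "0 < e" for e
  proof -
    have "e * (e * (\<mu> * (norm h)\<^sup>2)) \<le> e * ((grad (y + e *\<^sub>R h) - grad y) \<bullet> h)"
      using strongly_convex_gradient_monotone[OF grad strong, of y "y + e *\<^sub>R h"]
      by (simp add: power2_eq_square algebra_simps)
    then have "e * (\<mu> * (norm h)\<^sup>2) \<le> (grad (y + e *\<^sub>R h) - grad y) \<bullet> h"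
      using that by (simp add: mult_le_cancel_left)
    then show ?thesis by (simp add: inner_commute algebra_simps)
  qed
  have "- (h \<bullet> grad' h) \<le> - (\<mu> * (norm h)\<^sup>2)"
    by (rule DERIV_le_of_increments_le[OF deriv_h]) (simp add: increment)
  then show ?thesis by (simp add: inner_commute)
qed

lemma H_fun_antimono:
  assumes "0 \<le> \<alpha>" "0 \<le> \<beta>" "0 \<le> L" "0 \<le> s" "s \<le> t"
  shows "H_fun \<alpha> \<beta> L t \<le> H_fun \<alpha> \<beta> L s"
proof -
  have "\<beta> * L * s / (\<alpha> + 2) \<le> \<beta> * L * t / (\<alpha> + 2)"
    using assms by (intro divide_right_mono mult_left_mono) auto
  moreover have "L * s\<^sup>2 / (2 * (\<alpha> + 3)) \<le> L * t\<^sup>2 / (2 * (\<alpha> + 3))"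
    using assms by (intro divide_right_mono mult_left_mono power_mono) auto
  ultimately show ?thesis unfolding H_fun_def by linarith
qed

lemma H_fun_gt_half:
  assumes "0 \<le> \<alpha>" "0 \<le> \<beta>" "0 < L" "0 \<le> \<tau>" "\<tau> < tau2 \<alpha> \<beta> L"
  shows "1 / 2 < H_fun \<alpha> \<beta> L \<tau>"
proof -
  define b where "b = (\<alpha> + 3) / (\<alpha> + 2) * \<beta>"
  define c where "c = (\<alpha> + 3) / L"
  have "b \<ge> 0" "c > 0" using assms by (simp_all add: b_def c_def)
  have "((\<alpha> + 3) / (\<alpha> + 2))\<^sup>2 * \<beta>\<^sup>2 = b\<^sup>2"
    unfolding b_def by (rule power_mult_distrib[symmetric])
  moreover have "- (\<alpha> + 3) / (\<alpha> + 2) * \<beta> = - b"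
    unfolding b_def by (metis minus_divide_left mult_minus_left)
  ultimately have "tau2 \<alpha> \<beta> L = - b + sqrt (b\<^sup>2 + c)"
    unfolding tau2_def c_def by simp
  then have "\<tau> + b < sqrt (b\<^sup>2 + c)" using assms by linarith
  then have "(\<tau> + b)\<^sup>2 < b\<^sup>2 + c"
    using real_le_lsqrt[of "\<tau> + b" "b\<^sup>2 + c"] \<open>b \<ge> 0\<close> \<open>0 \<le> \<tau>\<close> by force
  then have "\<tau>\<^sup>2 + 2 * b * \<tau> < c"
    by (simp add: power2_eq_square algebra_simps)
  then have "L * (\<tau>\<^sup>2 + 2 * b * \<tau>) / (2 * (\<alpha> + 3)) < L * c / (2 * (\<alpha> + 3))"
    using assms by (intro divide_strict_right_mono mult_strict_left_mono) auto
  moreover have "L * c / (2 * (\<alpha> + 3)) = 1 / 2"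
    using assms by (simp add: c_def)
  moreover have "L * (\<tau>\<^sup>2 + 2 * b * \<tau>) / (2 * (\<alpha> + 3))
      = L * \<tau>\<^sup>2 / (2 * (\<alpha> + 3)) + \<beta> * L * \<tau> / (\<alpha> + 2)"
    using assms by (simp add: b_def field_simps)
  ultimately show ?thesis unfolding H_fun_def by linarith
qed

lemma varphi_pos_before_T_lambda:
  assumes "0 < s" "ereal s < T_lambda \<alpha> lam v a"
  shows "0 < varphi \<alpha> lam v a s"
proof (rule ccontr)
  assume "\<not> ?thesis"
  then have "T_lambda \<alpha> lam v a \<le> ereal s"
    unfolding T_lambda_def using assms(1) by (intro Inf_lower) auto
  with assms(2) show False by simp
qed

locale hessian_damped_trajectory =
  fixes grad :: "'a::real_inner \<Rightarrow> 'a"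
    and hess :: "'a \<Rightarrow> 'a \<Rightarrow>\<^sub>L 'a"
    and x v acc :: "real \<Rightarrow> 'a"
    and z :: 'a
    and L \<alpha> \<beta> :: real
  assumes hess_deriv: "\<And>y. (grad has_derivative blinfun_apply (hess y)) (at y)"
    and lip: "L-lipschitz_on UNIV grad"
    and alpha_pos: "\<alpha> > 0" and beta_nonneg: "\<beta> \<ge> 0"
    and x_deriv: "\<And>s. s \<ge> 0 \<Longrightarrow> (x has_vector_derivative v s) (at s within {0..})"
    and v_cont: "continuous_on {0..} v"
    and v_deriv: "\<And>s. s > 0 \<Longrightarrow> (v has_vector_derivative acc s) (at s)"
    and ode: "\<And>s. s > 0 \<Longrightarrow>
        acc s + (\<alpha> / s) *\<^sub>R v s + \<beta> *\<^sub>R blinfun_apply (hess (x s)) (v s) + grad (x s) = 0"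
    and init_x: "x 0 = z" and init_v: "v 0 = 0"
begin

lemma L_nonneg: "L \<ge> 0"
  using lipschitz_on_nonneg[OF lip] .

lemma norm_hess_le: "norm (blinfun_apply (hess y) h) \<le> L * norm h"
  by (rule lipschitz_on_imp_norm_derivative_le[OF hess_deriv lip])

lemma norm_hess_term_le:
  "norm (\<beta> *\<^sub>R blinfun_apply (hess y) h + w) \<le> \<beta> * L * norm h + norm w"
proof -
  have "norm (\<beta> *\<^sub>R blinfun_apply (hess y) h + w) \<le> \<beta> * norm (blinfun_apply (hess y) h) + norm w"
    using beta_nonneg norm_triangle_ineq by (metis abs_of_nonneg norm_scaleR)
  then show ?thesis
    using mult_left_mono[OF norm_hess_le[of y h] beta_nonneg] by (simp add: mult.assoc)
qed

lemma x_has_vector_derivative_at: "s > 0 \<Longrightarrow> (x has_vector_derivative v s) (at s)"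
  using x_deriv[of s] at_within_interior[of s "{0..}"] by simp

lemma continuous_on_x: "continuous_on {0..} x"
  unfolding continuous_on_eq_continuous_within
  using x_deriv has_vector_derivative_continuous by blast

lemma continuous_on_grad_x: "continuous_on {0..} (\<lambda>s. grad (x s))"
  by (rule continuous_on_compose2[OF lipschitz_on_continuous_on[OF lip] continuous_on_x]) auto

text \<open>Multiplying the velocity by \<open>r powr \<alpha>\<close> absorbs the damping term \<open>(\<alpha> / r) *\<^sub>R v r\<close>
  of the equation; the extra term makes the derivative small when \<open>grad (x r)\<close> stays close to \<open>c\<close>.\<close>
definition momentum :: "'a \<Rightarrow> real \<Rightarrow> 'a" where
  "momentum c r = (r powr \<alpha>) *\<^sub>R v r + (r powr (\<alpha> + 1) / (\<alpha> + 1)) *\<^sub>R c"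

lemma momentum_has_vector_derivative:
  assumes "r > 0"
  shows "(momentum c has_vector_derivative
     - (r powr \<alpha>) *\<^sub>R (\<beta> *\<^sub>R blinfun_apply (hess (x r)) (v r) + (grad (x r) - c))) (at r)"
proof -
  have "(momentum c has_vector_derivative
     (\<alpha> * r powr (\<alpha> - 1)) *\<^sub>R v r + (r powr \<alpha>) *\<^sub>R acc r + (r powr \<alpha>) *\<^sub>R c) (at r)"
  proof -
    have "((\<lambda>r. r powr \<alpha>) has_real_derivative \<alpha> * r powr (\<alpha> - 1)) (at r)"
      "((\<lambda>r. r powr (\<alpha> + 1) / (\<alpha> + 1)) has_real_derivative r powr \<alpha>) (at r)"
      using assms alpha_pos by (auto intro!: derivative_eq_intros)
    from has_vector_derivative_scaleR[OF this(1) v_deriv[OF assms]]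
      has_vector_derivative_scaleR[OF this(2) has_vector_derivative_const[of c]]
    show ?thesis
      unfolding momentum_def
      by (rule has_vector_derivative_eq_rhs[OF has_vector_derivative_add]) (simp add: algebra_simps)
  qed
  moreover have "r powr (\<alpha> - 1) = r powr \<alpha> / r"
    using assms by (simp add: powr_diff)
  moreover have "acc r = - ((\<alpha> / r) *\<^sub>R v r + \<beta> *\<^sub>R blinfun_apply (hess (x r)) (v r) + grad (x r))"
    using ode[OF assms] by (simp add: eq_neg_iff_add_eq_0 algebra_simps)
  ultimately show ?thesis
    by (simp add: algebra_simps)
qed

lemma momentum_eq: "r > 0 \<Longrightarrow> momentum c r = (r powr \<alpha>) *\<^sub>R (v r + (r / (\<alpha> + 1)) *\<^sub>R c)"
  by (simp add: momentum_def powr_add algebra_simps)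

lemma norm_momentum_le:
  assumes r: "r > 0" and B: "continuous_on {0..r} B" "B 0 = 0"
    and B_deriv: "\<And>u. 0 < u \<Longrightarrow> u < r \<Longrightarrow> (B has_real_derivative u powr \<alpha> * b u) (at u)"
    and b: "\<And>u. 0 < u \<Longrightarrow> u < r \<Longrightarrow>
      norm (\<beta> *\<^sub>R blinfun_apply (hess (x u)) (v u) + (grad (x u) - c)) \<le> b u"
  shows "norm (momentum c r) \<le> B r"
proof -
  have "continuous_on {0..r} (momentum c)"
    unfolding momentum_def using alpha_pos
    by (intro continuous_intros continuous_on_powr' continuous_on_subset[OF v_cont]) auto
  then have "norm (momentum c r - momentum c 0) \<le> B r - B 0"
  proof (rule differentiable_bound_general[OF r _ B(1)])
    show "(momentum c has_vector_derivative
        - (u powr \<alpha>) *\<^sub>R (\<beta> *\<^sub>R blinfun_apply (hess (x u)) (v u) + (grad (x u) - c))) (at u)"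
      if "0 < u" for u
      using momentum_has_vector_derivative[OF that] .
    show "(B has_vector_derivative u powr \<alpha> * b u) (at u)" if "0 < u" "u < r" for u
      using B_deriv[OF that] by (simp add: has_real_derivative_iff_has_vector_derivative)
    show "norm (- (u powr \<alpha>) *\<^sub>R (\<beta> *\<^sub>R blinfun_apply (hess (x u)) (v u) + (grad (x u) - c)))
        \<le> u powr \<alpha> * b u" if "0 < u" "u < r" for u
      using b[OF that] by (simp add: mult_left_mono)
  qed
  then show ?thesis
    using alpha_pos by (simp add: momentum_def init_v B(2))
qed

lemma velocity_linear_bound:
  assumes s: "s > 0"
  obtains K where "\<And>r. 0 < r \<Longrightarrow> r \<le> s \<Longrightarrow> norm (v r) \<le> K * r"
proof -
  define N where "N u = \<beta> * L * norm (v u) + norm (grad (x u))" for u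
  have "continuous_on {0..s} N"
    unfolding N_def by (intro continuous_intros continuous_on_subset[OF v_cont]
        continuous_on_subset[OF continuous_on_grad_x]) auto
  then have "bounded (N ` {0..s})"
    by (intro compact_imp_bounded compact_continuous_image) auto
  then obtain K where K: "\<And>u. u \<in> {0..s} \<Longrightarrow> N u \<le> K"
    unfolding bounded_iff by (metis imageI real_norm_def abs_le_iff)
  have "norm (v r) \<le> K / (\<alpha> + 1) * r" if r: "0 < r" "r \<le> s" for r
  proof -
    have "norm (momentum 0 r) \<le> K * (r powr (\<alpha> + 1) / (\<alpha> + 1))"
    proof (rule norm_momentum_le[OF r(1)])
      show "continuous_on {0..r} (\<lambda>u. K * (u powr (\<alpha> + 1) / (\<alpha> + 1)))"
        using alpha_pos by (intro continuous_intros continuous_on_powr') auto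
      show "((\<lambda>u. K * (u powr (\<alpha> + 1) / (\<alpha> + 1))) has_real_derivative u powr \<alpha> * K) (at u)"
        if "0 < u" for u
        using that alpha_pos by (auto intro!: derivative_eq_intros)
      show "norm (\<beta> *\<^sub>R blinfun_apply (hess (x u)) (v u) + (grad (x u) - 0)) \<le> K"
        if "0 < u" "u < r" for u
        using norm_hess_term_le[of "x u" "v u" "grad (x u)"] K[of u] that r by (simp add: N_def)
    qed (use alpha_pos in simp)
    then have "r powr \<alpha> * norm (v r) \<le> r powr \<alpha> * (K / (\<alpha> + 1) * r)"
      using r alpha_pos by (simp add: momentum_eq powr_add mult_ac)
    then show ?thesis
      using r by (subst (asm) mult_le_cancel_left_pos) auto
  qed
  then show ?thesis using that by blast
qed

lemma norm_displacement_le: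
  assumes r: "r > 0" and vC: "\<And>u. 0 < u \<Longrightarrow> u \<le> r \<Longrightarrow> norm (v u) \<le> C * u"
  shows "norm (x r - z) \<le> C * r\<^sup>2 / 2"
proof -
  have "norm (x r - x 0) \<le> C * r\<^sup>2 / 2 - C * 0\<^sup>2 / 2"
  proof (rule differentiable_bound_general[OF r, where f'=v and \<phi>'="\<lambda>u. C * u"])
    show "continuous_on {0..r} x" by (rule continuous_on_subset[OF continuous_on_x]) auto
    show "continuous_on {0..r} (\<lambda>u. C * u\<^sup>2 / 2)" by (intro continuous_intros) auto
    show "(x has_vector_derivative v u) (at u)" if "0 < u" for u
      using x_has_vector_derivative_at[OF that] .
    show "((\<lambda>u. C * u\<^sup>2 / 2) has_vector_derivative C * u) (at u)" for u
      unfolding has_real_derivative_iff_has_vector_derivative[symmetric]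
      by (auto intro!: derivative_eq_intros)
    show "norm (v u) \<le> C * u" if "0 < u" "u < r" for u
      using vC that by simp
  qed
  then show ?thesis by (simp add: init_x)
qed

lemma velocity_deviation_le:
  assumes r: "r > 0" and vC: "\<And>u. 0 < u \<Longrightarrow> u \<le> r \<Longrightarrow> norm (v u) \<le> C * u"
  shows "norm (v r + (r / (\<alpha> + 1)) *\<^sub>R grad z) \<le> C * r * (1 - H_fun \<alpha> \<beta> L r)"
proof -
  \<comment> \<open>\<open>B\<close> is the primitive of \<open>u powr \<alpha> * C * L * (\<beta> * u + u\<^sup>2 / 2)\<close>; this is where \<open>H_fun\<close> comes from.\<close>
  define B where
    "B u = C * L * (\<beta> * u powr (\<alpha> + 2) / (\<alpha> + 2) + u powr (\<alpha> + 3) / (2 * (\<alpha> + 3)))" for u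
  have "norm (momentum (grad z) r) \<le> B r"
  proof (rule norm_momentum_le[OF r])
    show "continuous_on {0..r} B"
      unfolding B_def using alpha_pos by (intro continuous_intros continuous_on_powr') auto
    show "B 0 = 0" using alpha_pos by (simp add: B_def)
    show "(B has_real_derivative u powr \<alpha> * (C * L * (\<beta> * u + u\<^sup>2 / 2))) (at u)" if "0 < u" for u
    proof -
      have "((\<lambda>u. u powr (\<alpha> + k)) has_real_derivative (\<alpha> + k) * u powr (\<alpha> + (k - 1))) (at u)"
        for k :: real
        using has_real_derivative_powr[OF that, of "\<alpha> + k"] by (simp add: algebra_simps)
      from this[of 2] this[of 3]
      have "(B has_real_derivative C * L * (\<beta> * ((\<alpha> + 2) * u powr (\<alpha> + 1)) / (\<alpha> + 2)
          + (\<alpha> + 3) * u powr (\<alpha> + 2) / (2 * (\<alpha> + 3)))) (at u)"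
        unfolding B_def by (intro DERIV_cmult DERIV_add DERIV_cdivide) auto
      moreover have "\<beta> * ((\<alpha> + 2) * u powr (\<alpha> + 1)) / (\<alpha> + 2) = u powr \<alpha> * (\<beta> * u)"
        "(\<alpha> + 3) * u powr (\<alpha> + 2) / (2 * (\<alpha> + 3)) = u powr \<alpha> * (u\<^sup>2 / 2)"
        using that alpha_pos by (simp_all add: powr_add powr_realpow field_simps)
      ultimately show ?thesis by (simp only: distrib_left mult.left_commute)
    qed
    show "norm (\<beta> *\<^sub>R blinfun_apply (hess (x u)) (v u) + (grad (x u) - grad z))
        \<le> C * L * (\<beta> * u + u\<^sup>2 / 2)" if u: "0 < u" "u < r" for u
    proof -
      have "norm (\<beta> *\<^sub>R blinfun_apply (hess (x u)) (v u) + (grad (x u) - grad z))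
          \<le> \<beta> * L * norm (v u) + L * norm (x u - z)"
        using norm_hess_term_le[of "x u" "v u" "grad (x u) - grad z"] lipschitz_onD[OF lip, of "x u" z]
        by (simp add: dist_norm)
      also have "\<dots> \<le> \<beta> * L * (C * u) + L * (C * u\<^sup>2 / 2)"
        using beta_nonneg L_nonneg vC u norm_displacement_le[OF u(1)]
        by (intro add_mono mult_left_mono) auto
      finally show ?thesis by (simp add: algebra_simps)
    qed
  qed
  moreover have "B r = r powr \<alpha> * (C * r * (1 - H_fun \<alpha> \<beta> L r))"
  proof -
    have "r powr (\<alpha> + 2) = r powr \<alpha> * r\<^sup>2" "r powr (\<alpha> + 3) = r powr \<alpha> * r ^ 3"
      using r by (simp_all add: powr_add powr_realpow)
    then show ?thesis
      by (simp add: B_def H_fun_def algebra_simps power2_eq_square power3_eq_cube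
          add_divide_distrib diff_divide_distrib)
  qed
  ultimately have "r powr \<alpha> * norm (v r + (r / (\<alpha> + 1)) *\<^sub>R grad z)
      \<le> r powr \<alpha> * (C * r * (1 - H_fun \<alpha> \<beta> L r))"
    using r by (simp add: momentum_eq)
  then show ?thesis
    using r by (subst (asm) mult_le_cancel_left_pos) auto
qed

lemma velocity_ratio_bound:
  assumes s: "s > 0"
  obtains C where "C \<ge> 0" "\<And>r. 0 < r \<Longrightarrow> r \<le> s \<Longrightarrow> norm (v r) \<le> C * r"
    and "C * H_fun \<alpha> \<beta> L s \<le> norm (grad z) / (\<alpha> + 1)"
proof -
  \<comment> \<open>\<open>Sup S\<close> is finite by the a priori bound and is then improved by the deviation estimate\<close>
  define S where "S = (\<lambda>r. norm (v r) / r) ` {0<..s}"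
  obtain K where K: "\<And>r. 0 < r \<Longrightarrow> r \<le> s \<Longrightarrow> norm (v r) \<le> K * r"
    using velocity_linear_bound[OF s] by blast
  have bdd: "bdd_above S"
    unfolding S_def by (rule bdd_aboveI[of _ K]) (auto simp: K divide_le_eq)
  have vC: "norm (v r) \<le> Sup S * r" if "0 < r" "r \<le> s" for r
  proof -
    have "norm (v r) / r \<le> Sup S"
      by (rule cSup_upper[OF _ bdd]) (use that in \<open>auto simp: S_def\<close>)
    then show ?thesis using that by (simp add: divide_le_eq)
  qed
  have "0 \<le> Sup S * s"
    using vC[of s] s norm_ge_zero order_trans by blast
  then have C_nonneg: "Sup S \<ge> 0"
    using s by (simp add: zero_le_mult_iff)
  have "norm (v r) / r \<le> norm (grad z) / (\<alpha> + 1) + Sup S * (1 - H_fun \<alpha> \<beta> L s)"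
    if r: "0 < r" "r \<le> s" for r
  proof -
    have "norm (v r + (r / (\<alpha> + 1)) *\<^sub>R grad z) \<le> Sup S * r * (1 - H_fun \<alpha> \<beta> L r)"
      using velocity_deviation_le[OF r(1)] vC r by simp
    also have "\<dots> \<le> Sup S * r * (1 - H_fun \<alpha> \<beta> L s)"
      using H_fun_antimono[of \<alpha> \<beta> L r s] alpha_pos beta_nonneg L_nonneg r C_nonneg
      by (intro mult_left_mono) auto
    finally have "norm (v r) \<le> r * (norm (grad z) / (\<alpha> + 1) + Sup S * (1 - H_fun \<alpha> \<beta> L s))"
      using norm_triangle_ineq4[of "v r + (r / (\<alpha> + 1)) *\<^sub>R grad z" "(r / (\<alpha> + 1)) *\<^sub>R grad z"]
        r alpha_pos
      by (simp add: algebra_simps)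
    then show ?thesis
      using r by (simp add: divide_le_eq mult.commute)
  qed
  then have "Sup S \<le> norm (grad z) / (\<alpha> + 1) + Sup S * (1 - H_fun \<alpha> \<beta> L s)"
    using s by (intro cSup_least) (auto simp: S_def)
  then show ?thesis
    using that[OF C_nonneg vC] by (simp add: algebra_simps)
qed

lemma velocity_lower_bound:
  assumes s: "s > 0" and H: "H_fun \<alpha> \<beta> L s > 0"
  shows "s * norm (grad z) / (\<alpha> + 1) * (2 - 1 / H_fun \<alpha> \<beta> L s) \<le> norm (v s)"
proof -
  define g where "g = norm (grad z)"
  define h where "h = H_fun \<alpha> \<beta> L s"
  obtain C where C: "C \<ge> 0" "\<And>r. 0 < r \<Longrightarrow> r \<le> s \<Longrightarrow> norm (v r) \<le> C * r"
    and CH: "C * h \<le> g / (\<alpha> + 1)"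
    using velocity_ratio_bound[OF s] unfolding g_def h_def by blast
  have "h \<le> 1"
    using H_fun_antimono[of \<alpha> \<beta> L 0 s] alpha_pos beta_nonneg L_nonneg s
    by (simp add: h_def H_fun_def)
  have "s / (\<alpha> + 1) * g \<le> norm (v s + (s / (\<alpha> + 1)) *\<^sub>R grad z) + norm (v s)"
    using norm_triangle_ineq4[of "v s + (s / (\<alpha> + 1)) *\<^sub>R grad z" "v s"] s alpha_pos
    by (simp add: g_def)
  also have "\<dots> \<le> C * s * (1 - h) + norm (v s)"
    using velocity_deviation_le[OF s C(2)] by (simp add: h_def)
  also have "C * s * (1 - h) \<le> g / ((\<alpha> + 1) * h) * s * (1 - h)"
    using CH H s \<open>h \<le> 1\<close> alpha_pos
    by (intro mult_right_mono) (auto simp: h_def pos_le_divide_eq mult.commute mult.left_commute)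
  finally have "s / (\<alpha> + 1) * g - g / ((\<alpha> + 1) * h) * s * (1 - h) \<le> norm (v s)"
    by simp
  moreover have "s / (\<alpha> + 1) * g - g / ((\<alpha> + 1) * h) * s * (1 - h) = s * g / (\<alpha> + 1) * (2 - 1 / h)"
    using H alpha_pos unfolding h_def[symmetric] by (simp add: divide_simps) (simp add: algebra_simps)
  ultimately show ?thesis by (simp add: g_def h_def)
qed

lemma velocity_sq_lower_bound:
  assumes s: "0 < s" "s \<le> \<tau>" and H: "1 / 2 < H_fun \<alpha> \<beta> L \<tau>"
  shows "s\<^sup>2 * ((norm (grad z))\<^sup>2 * Psi_fun \<alpha> \<beta> L \<tau> / (\<alpha> + 1)\<^sup>2) \<le> (norm (v s))\<^sup>2"
proof -
  have H_s: "H_fun \<alpha> \<beta> L \<tau> \<le> H_fun \<alpha> \<beta> L s"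
    using H_fun_antimono alpha_pos beta_nonneg L_nonneg s by simp
  have "0 \<le> 2 - 1 / H_fun \<alpha> \<beta> L \<tau>" "2 - 1 / H_fun \<alpha> \<beta> L \<tau> \<le> 2 - 1 / H_fun \<alpha> \<beta> L s"
    using H H_s by (auto simp: field_simps)
  then have "s * norm (grad z) / (\<alpha> + 1) * (2 - 1 / H_fun \<alpha> \<beta> L \<tau>)
      \<le> s * norm (grad z) / (\<alpha> + 1) * (2 - 1 / H_fun \<alpha> \<beta> L s)"
    using s alpha_pos by (intro mult_left_mono) auto
  also have "\<dots> \<le> norm (v s)"
    using velocity_lower_bound[OF s(1)] H H_s by simp
  finally have "(s * norm (grad z) / (\<alpha> + 1) * (2 - 1 / H_fun \<alpha> \<beta> L \<tau>))\<^sup>2 \<le> (norm (v s))\<^sup>2"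
    using \<open>0 \<le> 2 - 1 / H_fun \<alpha> \<beta> L \<tau>\<close> s alpha_pos by (intro power_mono) auto
  then show ?thesis
    by (simp add: Psi_fun_def power_mult_distrib power_divide)
qed

end

locale strongly_convex_hessian_damped_trajectory = hessian_damped_trajectory +
  fixes \<phi> :: "'a \<Rightarrow> real" and \<mu> :: real
  assumes grad: "\<And>y. (\<phi> has_derivative (\<lambda>h. grad y \<bullet> h)) (at y)"
    and strong: "strongly_convex \<mu> \<phi>" and mu_nonneg: "\<mu> \<ge> 0"
begin

lemma continuous_on_phi_x: "continuous_on {0..} (\<lambda>s. \<phi> (x s))"
proof -
  have "continuous_on UNIV \<phi>"
    by (intro continuous_at_imp_continuous_on ballI has_derivative_continuous[OF grad])
  then show ?thesis
    by (rule continuous_on_compose2[OF _ continuous_on_x]) auto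
qed

lemma phi_x_has_real_derivative:
  "s > 0 \<Longrightarrow> ((\<lambda>s. \<phi> (x s)) has_real_derivative grad (x s) \<bullet> v s) (at s)"
  using vector_derivative_diff_chain_within[OF x_has_vector_derivative_at has_derivative_at_withinI[OF grad]]
  by (simp add: o_def has_real_derivative_iff_has_vector_derivative)

lemma energy_dissipation:
  assumes s: "s > 0" and varphi: "0 \<le> varphi \<alpha> lam v acc s"
  shows "grad (x s) \<bullet> v s \<le> - (((1 - lam) * \<alpha> / s + \<beta> * \<mu>) * (norm (v s))\<^sup>2)"
proof -
  have grad_x: "grad (x s) = - (acc s + (\<alpha> / s) *\<^sub>R v s + \<beta> *\<^sub>R blinfun_apply (hess (x s)) (v s))"
    using ode[OF s] by (metis add.commute eq_neg_iff_add_eq_0)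
  then have "grad (x s) \<bullet> v s = - (v s \<bullet> acc s) - \<alpha> / s * (norm (v s))\<^sup>2
      - \<beta> * (blinfun_apply (hess (x s)) (v s) \<bullet> v s)"
    unfolding grad_x by (simp add: algebra_simps inner_commute power2_norm_eq_inner)
  moreover have "\<beta> * (\<mu> * (norm (v s))\<^sup>2) \<le> \<beta> * (blinfun_apply (hess (x s)) (v s) \<bullet> v s)"
    using strongly_convex_second_derivative_ge[OF grad strong hess_deriv] beta_nonneg
    by (intro mult_left_mono) auto
  ultimately show ?thesis
    using varphi by (simp add: varphi_def algebra_simps diff_divide_distrib)
qed

lemma energy_nonincreasing:
  assumes "0 \<le> a" "a \<le> b" "lam \<le> 1"
    and varphi: "\<And>s. a < s \<Longrightarrow> s < b \<Longrightarrow> 0 \<le> varphi \<alpha> lam v acc s"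
  shows "\<phi> (x b) \<le> \<phi> (x a)"
proof (rule DERIV_nonpos_imp_decreasing_open[OF \<open>a \<le> b\<close>])
  show "\<exists>d. ((\<lambda>s. \<phi> (x s)) has_real_derivative d) (at s) \<and> d \<le> 0" if "a < s" "s < b" for s
  proof (intro exI conjI)
    show "((\<lambda>s. \<phi> (x s)) has_real_derivative grad (x s) \<bullet> v s) (at s)"
      using phi_x_has_real_derivative that assms(1) by simp
    have "0 \<le> ((1 - lam) * \<alpha> / s + \<beta> * \<mu>) * (norm (v s))\<^sup>2"
      using that assms alpha_pos beta_nonneg mu_nonneg by simp
    moreover have "grad (x s) \<bullet> v s \<le> - (((1 - lam) * \<alpha> / s + \<beta> * \<mu>) * (norm (v s))\<^sup>2)"
      using energy_dissipation varphi that assms(1) by simp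
    ultimately show "grad (x s) \<bullet> v s \<le> 0"
      by linarith
  qed
  show "continuous_on {a..b} (\<lambda>s. \<phi> (x s))"
    by (rule continuous_on_subset[OF continuous_on_phi_x]) (use assms(1) in auto)
qed

lemma energy_initial_decrease:
  assumes "0 < \<tau>" "lam \<le> 1"
    and varphi: "\<And>s. 0 < s \<Longrightarrow> s < \<tau> \<Longrightarrow> 0 \<le> varphi \<alpha> lam v acc s"
    and velocity: "\<And>s. 0 < s \<Longrightarrow> s < \<tau> \<Longrightarrow> s\<^sup>2 * A \<le> (norm (v s))\<^sup>2"
  shows "\<phi> (x \<tau>) \<le> \<phi> z - A * \<tau>\<^sup>2 * ((1 - lam) * \<alpha> / 2 + \<beta> * \<mu> * \<tau> / 3)"
proof -
  \<comment> \<open>the energy plus the dissipation that the velocity bound guarantees on \<open>[0, s]\<close>\<close>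
  define E where "E s = \<phi> (x s) + A * ((1 - lam) * \<alpha> * s\<^sup>2 / 2 + \<beta> * \<mu> * s ^ 3 / 3)" for s
  have "E \<tau> \<le> E 0"
  proof (rule DERIV_nonpos_imp_decreasing_open[of 0 \<tau> E])
    show "0 \<le> \<tau>" using assms(1) by simp
    show "\<exists>d. (E has_real_derivative d) (at s) \<and> d \<le> 0" if "0 < s" "s < \<tau>" for s
    proof (intro exI conjI)
      show "(E has_real_derivative grad (x s) \<bullet> v s + A * ((1 - lam) * \<alpha> * s + \<beta> * \<mu> * s\<^sup>2)) (at s)"
        unfolding E_def by (rule derivative_eq_intros phi_x_has_real_derivative[OF \<open>0 < s\<close>] refl | simp)+
      have c: "0 \<le> (1 - lam) * \<alpha> / s + \<beta> * \<mu>"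
        using that assms alpha_pos beta_nonneg mu_nonneg by simp
      have "grad (x s) \<bullet> v s \<le> - (((1 - lam) * \<alpha> / s + \<beta> * \<mu>) * (norm (v s))\<^sup>2)"
        using energy_dissipation varphi that by simp
      also have "\<dots> \<le> - (((1 - lam) * \<alpha> / s + \<beta> * \<mu>) * (s\<^sup>2 * A))"
        using mult_left_mono[OF velocity[OF that] c] by linarith
      also have "\<dots> = - (A * ((1 - lam) * \<alpha> * s + \<beta> * \<mu> * s\<^sup>2))"
        using that by (simp add: field_simps power2_eq_square)
      finally show "grad (x s) \<bullet> v s + A * ((1 - lam) * \<alpha> * s + \<beta> * \<mu> * s\<^sup>2) \<le> 0"
        by simp
    qed
    show "continuous_on {0..\<tau>} E"
      unfolding E_def
      by (intro continuous_intros continuous_on_subset[OF continuous_on_phi_x]) auto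
  qed
  then show ?thesis
    by (simp add: E_def init_x power2_eq_square power3_eq_cube algebra_simps)
qed

end

theorem mainTheorem10:
  fixes \<phi> :: "'a::euclidean_space \<Rightarrow> real"
    and grad :: "'a \<Rightarrow> 'a"
    and hess :: "'a \<Rightarrow> 'a \<Rightarrow>\<^sub>L 'a"
    and x v acc :: "real \<Rightarrow> 'a"
    and z :: 'a
    and \<mu> L \<alpha> \<beta> lam \<phi>star \<tau> t :: real
  assumes grad: "\<And>y. (\<phi> has_derivative (\<lambda>h. grad y \<bullet> h)) (at y)"
    and hess: "\<And>y. (grad has_derivative blinfun_apply (hess y)) (at y)"
    and hess_cont: "continuous_on UNIV hess"
    and mu_pos: "\<mu> > 0"
    and strong: "strongly_convex \<mu> \<phi>"
    and L_pos: "L > 0"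
    and lip: "L-lipschitz_on UNIV grad"
    and min_val: "\<And>y. \<phi>star \<le> \<phi> y" and min_att: "\<exists>y. \<phi> y = \<phi>star"
    and alpha_pos: "\<alpha> > 0" and beta_nn: "\<beta> \<ge> 0"
    and lam: "0 \<le> lam" "lam \<le> 1"
    and x_deriv: "\<And>s. s \<ge> 0 \<Longrightarrow> (x has_vector_derivative v s) (at s within {0..})"
    and v_cont: "continuous_on {0..} v"
    and v_deriv: "\<And>s. s > 0 \<Longrightarrow> (v has_vector_derivative acc s) (at s)"
    and acc_cont: "continuous_on {0<..} acc"
    and ode: "\<And>s. s > 0 \<Longrightarrow>
        acc s + (\<alpha> / s) *\<^sub>R v s + \<beta> *\<^sub>R blinfun_apply (hess (x s)) (v s) + grad (x s) = 0"
    and init_x: "x 0 = z" and init_v: "v 0 = 0"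
    and z_not_min: "z \<notin> {y. \<phi> y = \<phi>star}"
    and tau_pos: "0 < \<tau>" and tau_lt: "\<tau> < tau2 \<alpha> \<beta> L"
    and tau_le_T: "ereal \<tau> \<le> T_lambda \<alpha> lam v acc"
    and t_ge: "\<tau> \<le> t" and t_le_T: "ereal t \<le> T_lambda \<alpha> lam v acc"
  shows "\<phi> (x t) - \<phi>star \<le>
    (1 - (\<alpha> * (1 - lam) / 2 + \<beta> * \<mu> * \<tau> / 3)
         * (2 * \<mu> * \<tau>\<^sup>2 * Psi_fun \<alpha> \<beta> L \<tau> / (\<alpha> + 1)\<^sup>2))
    * (\<phi> z - \<phi>star)"
proof -
  interpret strongly_convex_hessian_damped_trajectory grad hess x v acc z L \<alpha> \<beta> \<phi> \<mu>
    using hess lip alpha_pos beta_nn x_deriv v_cont v_deriv ode init_x init_v grad strong mu_pos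
    by unfold_locales auto
  define P where "P = \<alpha> * (1 - lam) / 2 + \<beta> * \<mu> * \<tau> / 3"
  define A where "A = (norm (grad z))\<^sup>2 * Psi_fun \<alpha> \<beta> L \<tau> / (\<alpha> + 1)\<^sup>2"
  have varphi: "0 \<le> varphi \<alpha> lam v acc s" if "0 < s" "s < t" for s
    using varphi_pos_before_T_lambda[OF that(1) less_le_trans[OF _ t_le_T]] that(2) by simp
  have H: "1 / 2 < H_fun \<alpha> \<beta> L \<tau>"
    using H_fun_gt_half alpha_pos beta_nn L_pos tau_pos tau_lt by simp
  have "\<phi> (x \<tau>) \<le> \<phi> z - A * \<tau>\<^sup>2 * P"
    using energy_initial_decrease[of \<tau> lam A] velocity_sq_lower_bound[OF _ _ H] varphi
      tau_pos t_ge lam unfolding A_def P_def by (simp add: mult.commute)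
  moreover have "\<phi> (x t) \<le> \<phi> (x \<tau>)"
    using energy_nonincreasing[of \<tau> t lam] varphi tau_pos t_ge lam by simp
  moreover obtain y where "\<phi> y = \<phi>star" using min_att ..
  then have "2 * \<mu> * (\<phi> z - \<phi>star) * (Psi_fun \<alpha> \<beta> L \<tau> / (\<alpha> + 1)\<^sup>2 * \<tau>\<^sup>2 * P)
      \<le> (norm (grad z))\<^sup>2 * (Psi_fun \<alpha> \<beta> L \<tau> / (\<alpha> + 1)\<^sup>2 * \<tau>\<^sup>2 * P)"
    using strongly_convex_gradient_dominated[OF grad strong] mu_pos alpha_pos lam beta_nn tau_pos
    unfolding P_def Psi_fun_def by (intro mult_right_mono) auto
  ultimately show ?thesis
    unfolding A_def P_def by (simp add: algebra_simps)
qed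

end
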